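(* Let $T>0$, let $U\subseteq\mathbb{R}^k$ with $0\in U$, let $f:[0,T]\times\mathbb{R}^n\times U\to\mathbb{R}^n$ be continuous and continuously differentiable in its second and third arguments, and let $x_0\in\mathbb{R}^n$. Let $\|\cdot\|$ be a norm on $\mathbb{R}^n$ with dual norm $\|\cdot\|_\star$, and $\|\cdot\|_U$ a norm on $\mathbb{R}^k$. Assume: (A1) there is $c>0$ such that for all $t\in[0,T]$ and $\tilde u\in U$, the map $x\mapsto f(t,x,\tilde u)$ has one-sided Lipschitz constant at most $-c$ with respect to $\|\cdot\|$, and the solution of $\dot x=f(t,x,0)$, $x(0)=x_0$ is bounded on $[0,T]$; (A2) for all $t\in[0,T]$ and $\tilde x\in\mathbb{R}^n$, the map $u\mapsto f(t,\tilde x,u)$ is Lipschitz from $(U,\|\cdot\|_U)$ to $(\mathbb{R}^n,\|\cdot\|)$ with constant $\ell_{f,u}$. Consider the system $\dot x(t)=f(t,x(t),u(t))$ and its adjoint $\dot\lambda(t)=-D_xf(t,x(t),u(t))^\top\lambda(t)-v(t)$ on $[0,T]$, with measurable inputs $u:[0,T]\to U$ and $v:[0,T]\to V$, where $U$ is bounded in $\|\cdot\|_U$ and $V\subset\mathbb{R}^n$ is bounded in $\|\cdot\|_\star$. Suppose the boundary conditions $x(0)$ and $\lambda(T)$ range over bounded sets. Then there exist sets $X\subset\mathbb{R}^n$ bounded in $\|\cdot\|$ and $\Lambda\subset\mathbb{R}^n$ bounded in $\|\cdot\|_\star$ such that $x(t)\in X$ and $\lambda(t)\in\Lambda$ for all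 $t\in[0,T]$, for all such boundary conditions, and for all measurable inputs $u:[0,T]\to U$ and $v:[0,T]\to V$.
   Context: The dual norm is $\|z\|_\star=\sup_{\|y\|\le1}y^\top z$. For a matrix $A$, the induced norm is $\|A\|=\sup_{\|x\|=1}\|Ax\|$ and the logarithmic norm is $\mu(A)=\lim_{h\to0^+}(\|I_n+hA\|-1)/h$. For continuously differentiable $F:\mathbb{R}^n\to\mathbb{R}^n$, its one-sided Lipschitz constant with respect to $\|\cdot\|$ is $\sup_{x}\mu(DF(x))$. Solutions are assumed to exist on $[0,T]$. *)

theory Defs
  imports "HOL-Analysis.Analysis"
begin

definition is_norm :: "('a::real_vector \<Rightarrow> real) \<Rightarrow> bool" where
  "is_norm N \<longleftrightarrow> (\<forall>x y. N (x + y) \<le> N x + N y) \<and> (\<forall>a x. N (a *\<^sub>R x) = \<bar>a\<bar> * N x)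
     \<and> (\<forall>x. N x = 0 \<longleftrightarrow> x = 0)"

definition dual_norm :: "(real^'n \<Rightarrow> real) \<Rightarrow> real^'n \<Rightarrow> real" where
  "dual_norm N z = (SUP y\<in>{y. N y \<le> 1}. y \<bullet> z)"

definition ind_norm :: "(real^'n \<Rightarrow> real) \<Rightarrow> real^'n^'n \<Rightarrow> real" where
  "ind_norm N A = (SUP x\<in>{x. N x = 1}. N (A *v x))"

definition log_norm :: "(real^'n \<Rightarrow> real) \<Rightarrow> real^'n^'n \<Rightarrow> real" where
  "log_norm N A = Lim (at_right 0) (\<lambda>h. (ind_norm N (mat 1 + h *\<^sub>R A) - 1) / h)"

definition bounded_wrt :: "('a \<Rightarrow> real) \<Rightarrow> 'a set \<Rightarrow> bool" where
  "bounded_wrt N S \<longleftrightarrow> (\<exists>B. \<forall>x\<in>S. N x \<le> B)"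

definition carath_sol :: "real \<Rightarrow> (real \<Rightarrow> 'a::euclidean_space \<Rightarrow> 'a) \<Rightarrow> (real \<Rightarrow> 'a) \<Rightarrow> bool" where
  "carath_sol T g y \<longleftrightarrow> (\<lambda>s. g s (y s)) absolutely_integrable_on {0..T}
     \<and> (\<forall>t\<in>{0..T}. ((\<lambda>s. g s (y s)) has_integral (y t - y 0)) {0..t})"

end

theory Submission
  imports Defs
begin

(* A sublinear functional P cannot grow faster than K along y(t) = y(a) + (integral of g from a
   to t) if at every time g = d + w with P w <= K and P not increasing to first order in the
   direction d: comparing the increments of P o y over a Henstock-fine tagged division, whose
   linearization errors are uniformly small by Henstock's lemma, gives P (y b) <= P (y a) + (b - a) K
   without any differentiability of y.
   For the state take P = N, y = x - xbar with xbar the nominal solution, d = f(t,x,u) - f(t,xbar,u)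
   and w = f(t,xbar,u) - f(t,xbar,0): a nonpositive logarithmic norm of D_x f gives
   N (x - y + s (F x - F y)) <= N (x - y) + o(s) as s -> 0+ for F = f(t,.,u), and w is controlled
   by the Lipschitz bound in u. For the adjoint, reverse time and take P the dual norm, d = (D_x f)^T lambda and
   w = v, using that the dual norm of M^T l is at most the induced norm of M times that of l.
   On the finite horizon [0,T] only mu(D_x f) <= 0 is used, not c > 0. *)

definition sublinear :: "('a::real_vector \<Rightarrow> real) \<Rightarrow> bool" where
  "sublinear P \<longleftrightarrow> (\<forall>x y. P (x + y) \<le> P x + P y) \<and> (\<forall>a x. 0 \<le> a \<longrightarrow> P (a *\<^sub>R x) \<le> a * P x)"

lemma sublinear_add_le: "sublinear P \<Longrightarrow> P (x + y) \<le> P x + P y"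
  unfolding sublinear_def by blast

lemma sublinear_scaleR_le: "sublinear P \<Longrightarrow> 0 \<le> a \<Longrightarrow> P (a *\<^sub>R x) \<le> a * P x"
  unfolding sublinear_def by blast

lemma sublinear_zero_le: "sublinear P \<Longrightarrow> P 0 \<le> 0"
  using sublinear_scaleR_le[of P 0 0] by simp

lemma sublinear_sum_le:
  assumes "sublinear P" "finite S"
  shows "P (sum f S) \<le> (\<Sum>i\<in>S. P (f i))"
  using assms(2)
proof (induction S rule: finite_induct)
  case empty
  then show ?case using sublinear_zero_le[OF assms(1)] by simp
next
  case (insert x F)
  then show ?case using sublinear_add_le[OF assms(1), of "f x" "sum f F"] by simp
qed

lemma sublinear_convex_combination_le:
  assumes P: "sublinear P" and "0 \<le> \<theta>" "\<theta> \<le> 1"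
  shows "P (\<theta> *\<^sub>R x + (1 - \<theta>) *\<^sub>R y) \<le> \<theta> * P x + (1 - \<theta>) * P y"
proof -
  have "P (\<theta> *\<^sub>R x + (1 - \<theta>) *\<^sub>R y) \<le> P (\<theta> *\<^sub>R x) + P ((1 - \<theta>) *\<^sub>R y)"
    by (rule sublinear_add_le[OF P])
  also have "\<dots> \<le> \<theta> * P x + (1 - \<theta>) * P y"
    using assms(2,3) by (intro add_mono sublinear_scaleR_le[OF P]) auto
  finally show ?thesis .
qed

lemma sublinear_bounded_by_norm:
  fixes P :: "'a::euclidean_space \<Rightarrow> real"
  assumes P: "sublinear P"
  obtains B where "B \<ge> 0" "\<And>x. P x \<le> B * norm x"
proof
  define B where "B = (\<Sum>b\<in>Basis. \<bar>P b\<bar> + \<bar>P (- b)\<bar>)"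
  show "B \<ge> 0" unfolding B_def by (simp add: sum_nonneg)
  have coord: "P ((x \<bullet> b) *\<^sub>R b) \<le> norm x * (\<bar>P b\<bar> + \<bar>P (- b)\<bar>)" if "b \<in> Basis" for x b
  proof -
    have "P ((x \<bullet> b) *\<^sub>R b) \<le> \<bar>x \<bullet> b\<bar> * (\<bar>P b\<bar> + \<bar>P (- b)\<bar>)"
    proof (cases "x \<bullet> b \<ge> 0")
      case True
      then have "P ((x \<bullet> b) *\<^sub>R b) \<le> (x \<bullet> b) * P b" by (rule sublinear_scaleR_le[OF P])
      also have "\<dots> \<le> (x \<bullet> b) * (\<bar>P b\<bar> + \<bar>P (- b)\<bar>)"
        using True by (intro mult_left_mono) auto
      also have "\<dots> = \<bar>x \<bullet> b\<bar> * (\<bar>P b\<bar> + \<bar>P (- b)\<bar>)" using True by simp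
      finally show ?thesis .
    next
      case False
      have "P ((x \<bullet> b) *\<^sub>R b) = P (\<bar>x \<bullet> b\<bar> *\<^sub>R (- b))" using False by simp
      also have "\<dots> \<le> \<bar>x \<bullet> b\<bar> * P (- b)" by (rule sublinear_scaleR_le[OF P]) simp
      also have "\<dots> \<le> \<bar>x \<bullet> b\<bar> * (\<bar>P b\<bar> + \<bar>P (- b)\<bar>)" by (intro mult_left_mono) auto
      finally show ?thesis .
    qed
    also have "\<dots> \<le> norm x * (\<bar>P b\<bar> + \<bar>P (- b)\<bar>)"
      using Basis_le_norm[OF that] by (intro mult_right_mono) auto
    finally show ?thesis .
  qed
  fix x :: 'a
  have "P x = P (\<Sum>b\<in>Basis. (x \<bullet> b) *\<^sub>R b)" by (simp add: euclidean_representation)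
  also have "\<dots> \<le> (\<Sum>b\<in>Basis. P ((x \<bullet> b) *\<^sub>R b))" by (rule sublinear_sum_le[OF P]) simp
  also have "\<dots> \<le> (\<Sum>b\<in>Basis. norm x * (\<bar>P b\<bar> + \<bar>P (- b)\<bar>))" by (intro sum_mono coord)
  also have "\<dots> = B * norm x" unfolding B_def by (simp add: sum_distrib_left mult.commute)
  finally show "P x \<le> B * norm x" .
qed

lemma sublinear_perturb_le:
  assumes P: "sublinear P" and B: "\<And>z. P z \<le> B * norm z" and w: "P w \<le> K" and h: "0 \<le> h"
  shows "P (v + h *\<^sub>R w + E) \<le> P v + h * K + B * norm E"
proof -
  have "P (v + h *\<^sub>R w + E) \<le> P v + P (h *\<^sub>R w) + P E"
    using sublinear_add_le[OF P, of "v + h *\<^sub>R w" E] sublinear_add_le[OF P, of v "h *\<^sub>R w"] by simp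
  also have "P (h *\<^sub>R w) \<le> h * K"
    using sublinear_scaleR_le[OF P h, of w] mult_left_mono[OF w h] by linarith
  finally show ?thesis using B[of E] by simp
qed

lemma is_norm_sublinear: "is_norm N \<Longrightarrow> sublinear N"
  unfolding is_norm_def sublinear_def by simp

lemma is_norm_scaleR: "is_norm N \<Longrightarrow> N (a *\<^sub>R x) = \<bar>a\<bar> * N x"
  unfolding is_norm_def by blast

lemma is_norm_triangle: "is_norm N \<Longrightarrow> N (x + y) \<le> N x + N y"
  unfolding is_norm_def by blast

lemma is_norm_zero: "is_norm N \<Longrightarrow> N 0 = 0"
  using is_norm_scaleR[of N 0 0] by simp

lemma is_norm_minus: "is_norm N \<Longrightarrow> N (- x) = N x"
  using is_norm_scaleR[of N "-1" x] by simp

lemma is_norm_nonneg: "is_norm N \<Longrightarrow> 0 \<le> N x"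
  using is_norm_triangle[of N x "- x"] is_norm_minus[of N x] is_norm_zero[of N] by simp

lemma is_norm_pos: "is_norm N \<Longrightarrow> x \<noteq> 0 \<Longrightarrow> 0 < N x"
  using is_norm_nonneg[of N x] unfolding is_norm_def by force

lemma is_norm_normalize: "is_norm N \<Longrightarrow> x \<noteq> 0 \<Longrightarrow> N ((1 / N x) *\<^sub>R x) = 1"
  using is_norm_pos[of N x] by (simp add: is_norm_scaleR)

lemma is_norm_continuous_on:
  fixes N :: "'a::euclidean_space \<Rightarrow> real"
  assumes "is_norm N"
  shows "continuous_on S N"
proof -
  obtain B where B: "B \<ge> 0" "\<And>x. N x \<le> B * norm x"
    using sublinear_bounded_by_norm[OF is_norm_sublinear[OF assms]] by blast
  have "\<bar>N x - N y\<bar> \<le> B * dist x y" for x y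
    using is_norm_triangle[OF assms, of "x - y" y] is_norm_triangle[OF assms, of "y - x" x]
      B(2)[of "x - y"] B(2)[of "y - x"]
    by (simp add: dist_norm norm_minus_commute)
  then have "B-lipschitz_on S N"
    by (intro lipschitz_onI) (simp_all add: B(1) dist_real_def)
  then show ?thesis by (rule lipschitz_on_continuous_on)
qed

lemma is_norm_bounded_below:
  fixes N :: "'a::euclidean_space \<Rightarrow> real"
  assumes "is_norm N"
  obtains a where "a > 0" "\<And>x. a * norm x \<le> N x"
proof -
  obtain b :: 'a where "b \<in> Basis" using nonempty_Basis by blast
  then have "sphere 0 1 \<noteq> ({}::'a set)" by (metis mem_sphere_0 norm_Basis empty_iff)
  then obtain z where z: "z \<in> sphere (0::'a) 1" "\<And>y. y \<in> sphere 0 1 \<Longrightarrow> N z \<le> N y"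
    using continuous_attains_inf[OF compact_sphere _ is_norm_continuous_on[OF assms]] by blast
  have "N z * norm x \<le> N x" for x
  proof (cases "x = 0")
    case False
    have "N z \<le> N ((1 / norm x) *\<^sub>R x)" using z(2) False by simp
    then show ?thesis using False by (simp add: is_norm_scaleR[OF assms] field_simps)
  qed (simp add: is_norm_zero[OF assms])
  moreover have "N z > 0" using z(1) is_norm_pos[OF assms, of z] by force
  ultimately show ?thesis using that by blast
qed

lemma bdd_above_dual_norm:
  fixes N :: "real^'n \<Rightarrow> real"
  assumes "is_norm N"
  shows "bdd_above ((\<lambda>y. y \<bullet> z) ` {y. N y \<le> 1})"
proof -
  obtain a where a: "a > 0" "\<And>x. a * norm x \<le> N x" using is_norm_bounded_below[OF assms] by blast
  have "y \<bullet> z \<le> norm z / a" if "N y \<le> 1" for y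
  proof -
    have "norm y \<le> 1 / a" using a(2)[of y] that a(1) by (simp add: field_simps)
    then have "y \<bullet> z \<le> (1 / a) * norm z"
      by (meson Cauchy_Schwarz_ineq2 abs_le_D1 mult_right_mono norm_ge_zero order_trans)
    then show ?thesis by simp
  qed
  then show ?thesis by (intro bdd_aboveI2) auto
qed

lemma inner_le_dual_norm: "is_norm N \<Longrightarrow> N y \<le> 1 \<Longrightarrow> y \<bullet> z \<le> dual_norm N z"
  unfolding dual_norm_def by (rule cSUP_upper[OF _ bdd_above_dual_norm]) auto

lemma dual_norm_le: "is_norm N \<Longrightarrow> (\<And>y. N y \<le> 1 \<Longrightarrow> y \<bullet> z \<le> M) \<Longrightarrow> dual_norm N z \<le> M"
  unfolding dual_norm_def
  by (rule cSUP_least) (auto intro: exI[of _ 0] simp: is_norm_zero)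

lemma dual_norm_nonneg: "is_norm N \<Longrightarrow> 0 \<le> dual_norm N z"
  using inner_le_dual_norm[of N 0 z] is_norm_zero[of N] by simp

lemma sublinear_dual_norm: "is_norm (N :: real^'n \<Rightarrow> real) \<Longrightarrow> sublinear (dual_norm N)"
  unfolding sublinear_def
proof (intro conjI allI impI)
  fix x y :: "real^'n" and a :: real
  assume N: "is_norm N"
  show "dual_norm N (x + y) \<le> dual_norm N x + dual_norm N y"
    by (rule dual_norm_le[OF N]) (simp add: inner_add_right add_mono inner_le_dual_norm[OF N])
  assume "0 \<le> a"
  then show "dual_norm N (a *\<^sub>R x) \<le> a * dual_norm N x"
    by (intro dual_norm_le[OF N]) (simp add: mult_left_mono inner_le_dual_norm[OF N])
qed

lemma inner_le_dual_norm_mult: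
  assumes "is_norm N"
  shows "l \<bullet> w \<le> dual_norm N l * N w"
proof (cases "w = 0")
  case False
  have "((1 / N w) *\<^sub>R w) \<bullet> l \<le> dual_norm N l"
    by (rule inner_le_dual_norm[OF assms]) (simp add: is_norm_normalize[OF assms False])
  then show ?thesis using is_norm_pos[OF assms False] by (simp add: inner_commute field_simps)
qed (simp add: is_norm_zero[OF assms] dual_norm_nonneg[OF assms])

lemma is_norm_unit_exists:
  fixes N :: "real^'n \<Rightarrow> real"
  assumes "is_norm N"
  obtains x where "N x = 1"
proof -
  obtain b :: "real^'n" where "b \<in> Basis" using nonempty_Basis by blast
  then have "b \<noteq> 0" by auto
  then show ?thesis using is_norm_normalize[OF assms] that by blast
qed

lemma bdd_above_ind_norm:
  fixes N :: "real^'n \<Rightarrow> real"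
  assumes "is_norm N"
  shows "bdd_above ((\<lambda>x. N (M *v x)) ` {x. N x = 1})"
proof -
  obtain a where a: "a > 0" "\<And>x. a * norm x \<le> N x" using is_norm_bounded_below[OF assms] by blast
  obtain B where B: "B \<ge> 0" "\<And>x. N x \<le> B * norm x"
    using sublinear_bounded_by_norm[OF is_norm_sublinear[OF assms]] by blast
  obtain K where K: "\<And>x. norm (M *v x) \<le> norm x * K"
    using bounded_linear.bounded[OF matrix_vector_mul_bounded_linear[of M]] by blast
  have "N (M *v x) \<le> B * (\<bar>K\<bar> / a)" if "N x = 1" for x
  proof -
    have "norm x \<le> 1 / a" using a(2)[of x] that a(1) by (simp add: field_simps)
    have "N (M *v x) \<le> B * norm (M *v x)" by (rule B(2))
    also have "\<dots> \<le> B * (norm x * \<bar>K\<bar>)" using K[of x] B(1)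
      by (meson abs_ge_self mult_left_mono norm_ge_zero order_trans)
    also have "\<dots> \<le> B * ((1 / a) * \<bar>K\<bar>)" using \<open>norm x \<le> 1 / a\<close> B(1)
      by (intro mult_left_mono mult_right_mono) auto
    finally show ?thesis by simp
  qed
  then show ?thesis by (intro bdd_aboveI2) auto
qed

lemma ind_norm_ge: "is_norm N \<Longrightarrow> N x = 1 \<Longrightarrow> N (M *v x) \<le> ind_norm N M"
  unfolding ind_norm_def by (rule cSUP_upper[OF _ bdd_above_ind_norm]) auto

lemma ind_norm_le: "is_norm N \<Longrightarrow> (\<And>x. N x = 1 \<Longrightarrow> N (M *v x) \<le> C) \<Longrightarrow> ind_norm N M \<le> C"
  unfolding ind_norm_def by (rule cSUP_least) (auto elim: is_norm_unit_exists)

lemma ind_norm_nonneg: "is_norm N \<Longrightarrow> 0 \<le> ind_norm N M"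
  by (metis is_norm_unit_exists ind_norm_ge is_norm_nonneg order_trans)

lemma ind_norm_mult_le:
  assumes "is_norm N"
  shows "N (M *v x) \<le> ind_norm N M * N x"
proof (cases "x = 0")
  case False
  have "N (M *v ((1 / N x) *\<^sub>R x)) \<le> ind_norm N M"
    by (rule ind_norm_ge[OF assms is_norm_normalize[OF assms False]])
  then show ?thesis using is_norm_pos[OF assms False]
    by (simp add: matrix_vector_mult_scaleR is_norm_scaleR[OF assms] field_simps)
qed (simp add: is_norm_zero[OF assms])

lemma ind_norm_mat_1:
  assumes "is_norm N"
  shows "ind_norm N (mat 1) = 1"
proof (rule antisym)
  show "ind_norm N (mat 1) \<le> 1" by (rule ind_norm_le[OF assms]) simp
  obtain x where "N x = 1" using is_norm_unit_exists[OF assms] .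
  then show "1 \<le> ind_norm N (mat 1)" using ind_norm_ge[OF assms, of x "mat 1"] by simp
qed

lemma sublinear_ind_norm: "is_norm (N :: real^'n \<Rightarrow> real) \<Longrightarrow> sublinear (ind_norm N)"
  unfolding sublinear_def
proof (intro conjI allI impI)
  fix M1 M2 :: "real^'n^'n" and a :: real
  assume N: "is_norm N"
  show "ind_norm N (M1 + M2) \<le> ind_norm N M1 + ind_norm N M2"
  proof (rule ind_norm_le[OF N])
    fix x assume "N x = 1"
    then show "N ((M1 + M2) *v x) \<le> ind_norm N M1 + ind_norm N M2"
      using is_norm_triangle[OF N, of "M1 *v x" "M2 *v x"] ind_norm_ge[OF N, of x M1] ind_norm_ge[OF N, of x M2]
      by (simp add: matrix_vector_mult_add_rdistrib)
  qed
  assume "0 \<le> a"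
  show "ind_norm N (a *\<^sub>R M1) \<le> a * ind_norm N M1"
  proof (rule ind_norm_le[OF N])
    fix x assume "N x = 1"
    then show "N ((a *\<^sub>R M1) *v x) \<le> a * ind_norm N M1"
      using \<open>0 \<le> a\<close> ind_norm_ge[OF N, of x M1]
      by (simp add: scaleR_matrix_vector_assoc[symmetric] is_norm_scaleR[OF N] mult_left_mono)
  qed
qed

lemma dual_norm_transpose_le:
  assumes N: "is_norm N"
  shows "dual_norm N (transpose M *v l) \<le> ind_norm N M * dual_norm N l"
proof (rule dual_norm_le[OF N])
  fix y assume y: "N y \<le> 1"
  have "y \<bullet> (transpose M *v l) = l \<bullet> (M *v y)"
    by (subst inner_commute) (simp add: dot_lmul_matrix)
  also have "\<dots> \<le> dual_norm N l * N (M *v y)" by (rule inner_le_dual_norm_mult[OF N])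
  also have "\<dots> \<le> dual_norm N l * ind_norm N M"
    using ind_norm_mult_le[OF N, of M y] y ind_norm_nonneg[OF N, of M] dual_norm_nonneg[OF N, of l]
    by (intro mult_left_mono) (auto intro: order_trans mult_left_le)
  finally show "y \<bullet> (transpose M *v l) \<le> ind_norm N M * dual_norm N l" by (simp add: mult.commute)
qed

section \<open>Logarithmic norms and first-order decrease\<close>

lemma ind_norm_quotient_mono:
  fixes N :: "real^'n \<Rightarrow> real"
  assumes N: "is_norm N" and s: "0 < s" "s \<le> t"
  shows "(ind_norm N (mat 1 + s *\<^sub>R A) - 1) / s \<le> (ind_norm N (mat 1 + t *\<^sub>R A) - 1) / t"
proof -
  have t: "0 < t" using s by simp
  have "mat 1 + s *\<^sub>R A = (1 - s / t) *\<^sub>R mat 1 + (s / t) *\<^sub>R (mat 1 + t *\<^sub>R A)"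
    using t by (simp add: algebra_simps)
  also have "ind_norm N \<dots> \<le> ind_norm N ((1 - s / t) *\<^sub>R mat 1) + ind_norm N ((s / t) *\<^sub>R (mat 1 + t *\<^sub>R A))"
    by (rule sublinear_add_le[OF sublinear_ind_norm[OF N]])
  also have "\<dots> \<le> (1 - s / t) * 1 + (s / t) * ind_norm N (mat 1 + t *\<^sub>R A)"
    using s t ind_norm_mat_1[OF N]
    by (intro add_mono order_trans[OF sublinear_scaleR_le[OF sublinear_ind_norm[OF N]]]) auto
  finally have "ind_norm N (mat 1 + s *\<^sub>R A) \<le> (1 - s / t) * 1 + (s / t) * ind_norm N (mat 1 + t *\<^sub>R A)" .
  then have "ind_norm N (mat 1 + s *\<^sub>R A) - 1 \<le> (ind_norm N (mat 1 + t *\<^sub>R A) - 1) / t * s"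
    by (simp add: algebra_simps diff_divide_distrib)
  then show ?thesis using s by (simp add: pos_divide_le_eq)
qed

lemma log_norm_tendsto:
  fixes N :: "real^'n \<Rightarrow> real"
  assumes N: "is_norm N"
  shows "((\<lambda>h. (ind_norm N (mat 1 + h *\<^sub>R A) - 1) / h) \<longlongrightarrow> log_norm N A) (at_right 0)"
proof -
  define q where "q h = (ind_norm N (mat 1 + h *\<^sub>R A) - 1) / h" for h
  have "- ind_norm N (- A) \<le> q h" if "0 < h" for h
  proof -
    have "1 = ind_norm N ((mat 1 + h *\<^sub>R A) + h *\<^sub>R (- A))" by (simp add: ind_norm_mat_1[OF N])
    also have "\<dots> \<le> ind_norm N (mat 1 + h *\<^sub>R A) + ind_norm N (h *\<^sub>R (- A))"
      by (rule sublinear_add_le[OF sublinear_ind_norm[OF N]])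
    also have "\<dots> \<le> ind_norm N (mat 1 + h *\<^sub>R A) + h * ind_norm N (- A)"
      using that by (intro add_left_mono sublinear_scaleR_le[OF sublinear_ind_norm[OF N]]) simp
    finally have "1 \<le> ind_norm N (mat 1 + h *\<^sub>R A) + h * ind_norm N (- A)" .
    then show ?thesis using that unfolding q_def by (simp add: field_simps)
  qed
  \<comment> \<open>\<open>q\<close> is monotone and bounded below, so the \<open>Lim\<close> in \<open>log_norm_def\<close> is a genuine limit\<close>
  then have "(q \<longlongrightarrow> Inf (q ` ({0<..} \<inter> UNIV))) (at_right 0)"
    using Lim_right_bound[of UNIV 0 q "- ind_norm N (- A)"] ind_norm_quotient_mono[OF N] unfolding q_def by simp
  moreover from this have "log_norm N A = Inf (q ` ({0<..} \<inter> UNIV))"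
    unfolding log_norm_def q_def[symmetric] by (rule tendsto_Lim[OF trivial_limit_at_right_real])
  ultimately show ?thesis unfolding q_def by simp
qed

lemma eventually_ind_norm_le:
  fixes N :: "real^'n \<Rightarrow> real"
  assumes N: "is_norm N" and m: "log_norm N A < m"
  shows "eventually (\<lambda>s. ind_norm N (mat 1 + s *\<^sub>R A) \<le> 1 + s * m) (at_right 0)"
  using order_tendstoD(2)[OF log_norm_tendsto[OF N] m] eventually_at_right_less[of "0::real"]
  by eventually_elim (simp add: field_simps)

definition dini_nonpos :: "('a::real_vector \<Rightarrow> real) \<Rightarrow> 'a \<Rightarrow> 'a \<Rightarrow> bool" where
  "dini_nonpos P x d \<longleftrightarrow> (\<forall>\<epsilon>>0. eventually (\<lambda>s. P (x + s *\<^sub>R d) \<le> P x + \<epsilon> * s) (at_right 0))"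

lemma dini_nonpos_dual_norm_transpose:
  fixes N :: "real^'n \<Rightarrow> real"
  assumes N: "is_norm N" and A: "log_norm N A \<le> 0"
  shows "dini_nonpos (dual_norm N) l (transpose A *v l)"
  unfolding dini_nonpos_def
proof (intro allI impI)
  fix \<epsilon> :: real assume "\<epsilon> > 0"
  define \<delta> where "\<delta> = \<epsilon> / (dual_norm N l + 1)"
  have "\<delta> > 0" and \<delta>: "\<delta> * dual_norm N l \<le> \<epsilon>"
    unfolding \<delta>_def using \<open>\<epsilon> > 0\<close> dual_norm_nonneg[OF N, of l] by (simp_all add: field_simps)
  show "eventually (\<lambda>s. dual_norm N (l + s *\<^sub>R (transpose A *v l)) \<le> dual_norm N l + \<epsilon> * s) (at_right 0)"
    using eventually_ind_norm_le[OF N order_le_less_trans[OF A \<open>\<delta> > 0\<close>]]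
      eventually_at_right_less[of "0::real"]
  proof eventually_elim
    case (elim s)
    have "l v* (s *\<^sub>R A) = s *\<^sub>R (l v* A)"
      by (simp add: vec_eq_iff vector_matrix_mult_def sum_distrib_left mult.left_commute)
    then have "l + s *\<^sub>R (transpose A *v l) = transpose (mat 1 + s *\<^sub>R A) *v l"
      by (simp add: vector_matrix_mult_add_rdistrib transpose_scalar)
    then have "dual_norm N (l + s *\<^sub>R (transpose A *v l)) \<le> ind_norm N (mat 1 + s *\<^sub>R A) * dual_norm N l"
      using dual_norm_transpose_le[OF N, of "mat 1 + s *\<^sub>R A" l] by simp
    also have "\<dots> \<le> (1 + s * \<delta>) * dual_norm N l"
      using elim dual_norm_nonneg[OF N, of l] by (intro mult_right_mono) auto
    also have "\<dots> \<le> dual_norm N l + \<epsilon> * s"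
      using \<delta> elim by (simp add: algebra_simps mult_left_mono)
    finally show ?case .
  qed
qed

lemma dini_nonpos_backward:
  assumes P: "sublinear P" and d: "dini_nonpos P x d" and h: "0 \<le> h"
  shows "P x \<le> P (x - h *\<^sub>R d)"
proof (cases "h = 0")
  case False
  then have h0: "h > 0" using h by simp
  show ?thesis
  proof (rule field_le_epsilon)
    fix \<epsilon> :: real assume "\<epsilon> > 0"
    then have "\<epsilon> / h > 0" using h0 by simp
    then have ev: "eventually (\<lambda>s. P (x + s *\<^sub>R d) \<le> P x + (\<epsilon> / h) * s) (at_right 0)"
      using d unfolding dini_nonpos_def by blast
    then obtain s where s: "s > 0" "P (x + s *\<^sub>R d) \<le> P x + (\<epsilon> / h) * s"
      using eventually_happens[OF eventually_conj[OF eventually_at_right_less ev]] by auto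
    define \<theta> where "\<theta> = s / (s + h)"
    have \<theta>: "0 \<le> \<theta>" "\<theta> \<le> 1" using s h0 by (simp_all add: \<theta>_def)
    have "(1 - \<theta>) * s - \<theta> * h = 0" using s h0 by (simp add: \<theta>_def field_simps)
    moreover have "\<theta> *\<^sub>R (x - h *\<^sub>R d) + (1 - \<theta>) *\<^sub>R (x + s *\<^sub>R d) = x + ((1 - \<theta>) * s - \<theta> * h) *\<^sub>R d"
      by (simp add: algebra_simps)
    ultimately have "P x \<le> \<theta> * P (x - h *\<^sub>R d) + (1 - \<theta>) * P (x + s *\<^sub>R d)"
      using sublinear_convex_combination_le[OF P \<theta>, of "x - h *\<^sub>R d" "x + s *\<^sub>R d"] by simp
    also have "\<dots> \<le> \<theta> * P (x - h *\<^sub>R d) + (1 - \<theta>) * (P x + (\<epsilon> / h) * s)"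
      using s \<theta> by (intro add_left_mono mult_left_mono) simp_all
    finally have "P x \<le> \<theta> * P (x - h *\<^sub>R d) + (1 - \<theta>) * (P x + (\<epsilon> / h) * s)" .
    moreover have "(1 - \<theta>) * ((\<epsilon> / h) * s) = \<theta> * \<epsilon>"
    proof -
      have "s + h \<noteq> 0" using s h0 by simp
      then have "1 - \<theta> = h / (s + h)" by (simp add: \<theta>_def field_simps)
      then show ?thesis using h0 by (simp add: \<theta>_def)
    qed
    ultimately have "\<theta> * P x \<le> \<theta> * (P (x - h *\<^sub>R d) + \<epsilon>)" by (simp add: algebra_simps)
    moreover have "\<theta> > 0" using s h0 by (simp add: \<theta>_def)
    ultimately show "P x \<le> P (x - h *\<^sub>R d) + \<epsilon>" by simp
  qed
qed simp

lemma onorm_matrix_vector_le: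
  fixes M :: "real^'n^'m"
  shows "onorm ((*v) M) \<le> real CARD('m) * real CARD('n) * norm M"
proof (rule onorm_le_matrix_component)
  fix i j
  have "\<bar>M $ i $ j\<bar> \<le> norm (M $ i)" by (rule component_le_norm_cart)
  also have "\<dots> \<le> norm M" by (rule Finite_Cartesian_Product.norm_nth_le)
  finally show "\<bar>M $ i $ j\<bar> \<le> norm M" .
qed

lemma linearization_error_on_segment:
  fixes F :: "real^'n \<Rightarrow> real^'m" and A :: "real^'n \<Rightarrow> real^'n^'m"
  assumes der: "\<And>z. (F has_derivative (\<lambda>h. A z *v h)) (at z)"
    and close: "\<And>z. z \<in> closed_segment a b \<Longrightarrow> norm (A z - A a) \<le> \<delta>"
  shows "norm (F b - F a - A a *v (b - a)) \<le> norm (b - a) * (real CARD('m) * real CARD('n) * \<delta>)"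
proof (rule differentiable_bound_linearization[where S="closed_segment a b" and f'="\<lambda>z h. A z *v h"])
  show "a + t *\<^sub>R (b - a) \<in> closed_segment a b" if "t \<in> {0..1}" for t
    using that unfolding in_segment by (intro exI[of _ t]) (auto simp: algebra_simps)
  show "(F has_derivative (\<lambda>h. A z *v h)) (at z within closed_segment a b)" for z
    by (rule has_derivative_at_withinI[OF der])
  fix z assume z: "z \<in> closed_segment a b"
  have "(\<lambda>h. A z *v h) - (\<lambda>h. A a *v h) = (*v) (A z - A a)"
    by (auto simp: fun_diff_def matrix_vector_mult_diff_rdistrib)
  then show "onorm ((\<lambda>h. A z *v h) - (\<lambda>h. A a *v h)) \<le> real CARD('m) * real CARD('n) * \<delta>"
    using onorm_matrix_vector_le[of "A z - A a"] close[OF z] by (simp add: order_trans)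
qed simp

lemma linearization_error_on_segment_pieces:
  fixes F :: "real^'n \<Rightarrow> real^'m" and A :: "real^'n \<Rightarrow> real^'n^'m"
  assumes der: "\<And>z. (F has_derivative (\<lambda>h. A z *v h)) (at z)"
    and cont: "continuous_on UNIV A" and "\<epsilon> > 0"
  obtains m :: nat where "0 < m"
    "\<And>j. j < m \<Longrightarrow> norm (F (y + (real (Suc j) / real m) *\<^sub>R e) - F (y + (real j / real m) *\<^sub>R e)
        - A (y + (real j / real m) *\<^sub>R e) *v ((1 / real m) *\<^sub>R e)) \<le> \<epsilon> * norm e / real m"
proof -
  define C where "C = real CARD('m) * real CARD('n)"
  have "C > 0" unfolding C_def by simp
  define \<gamma> where "\<gamma> \<theta> = y + \<theta> *\<^sub>R e" for \<theta> :: real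
  have "continuous_on {0..1} (A \<circ> \<gamma>)"
    by (rule continuous_on_compose[OF _ continuous_on_subset[OF cont]]) (auto simp: \<gamma>_def intro!: continuous_intros)
  then have "uniformly_continuous_on {0..1} (A \<circ> \<gamma>)"
    by (rule compact_uniformly_continuous[OF _ compact_Icc])
  moreover have "\<epsilon> / C > 0" using \<open>\<epsilon> > 0\<close> \<open>C > 0\<close> by simp
  ultimately obtain \<eta> where "\<eta> > 0" and \<eta>: "\<And>\<theta> \<theta>'. \<theta> \<in> {0..1} \<Longrightarrow> \<theta>' \<in> {0..1} \<Longrightarrow> dist \<theta>' \<theta> < \<eta> \<Longrightarrow>
      dist (A (\<gamma> \<theta>')) (A (\<gamma> \<theta>)) < \<epsilon> / C"
    unfolding uniformly_continuous_on_def by (metis comp_apply)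
  obtain m :: nat where m: "m > 0" "1 / real m < \<eta>"
    using ex_inverse_of_nat_less[OF \<open>\<eta> > 0\<close>] by (auto simp: inverse_eq_divide)
  have "norm (F (\<gamma> ((j + 1) / m)) - F (\<gamma> (j / m)) - A (\<gamma> (j / m)) *v ((1 / real m) *\<^sub>R e))
      \<le> \<epsilon> * norm e / real m" if "j < m" for j
  proof -
    have step: "\<gamma> ((j + 1) / m) - \<gamma> (j / m) = (1 / real m) *\<^sub>R e"
      unfolding \<gamma>_def by (simp add: add_divide_distrib algebra_simps)
    have "norm (A z - A (\<gamma> (j / m))) \<le> \<epsilon> / C" if "z \<in> closed_segment (\<gamma> (j / m)) (\<gamma> ((j + 1) / m))" for z
    proof -
      obtain u where u: "0 \<le> u" "u \<le> 1" "z = (1 - u) *\<^sub>R \<gamma> (j / m) + u *\<^sub>R \<gamma> ((j + 1) / m)"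
        using \<open>z \<in> _\<close> unfolding in_segment by blast
      have "(1 - u) * (j / m) + u * ((j + 1) / m) = j / m + u / m" using m by (simp add: field_simps)
      then have z: "z = \<gamma> (j / m + u / m)"
        unfolding u(3) \<gamma>_def by (simp add: algebra_simps flip: scaleR_add_left)
      have "j / m + u / m \<in> {0..1}" "real j / m \<in> {0..1}" "dist (j / m + u / m) (j / m) < \<eta>"
        using u \<open>j < m\<close> m by (auto simp: field_simps dist_real_def)
      then show ?thesis using \<eta> z by (fastforce simp: dist_norm)
    qed
    then show ?thesis
      using linearization_error_on_segment[OF der, of "\<gamma> (j / m)" "\<gamma> ((j + 1) / m)" "\<epsilon> / C"] \<open>C > 0\<close> m
      unfolding step C_def by (simp add: mult.commute add.commute)
  qed
  with m show ?thesis using that unfolding \<gamma>_def by (simp add: add.commute)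
qed

lemma sum_linearized_increments:
  fixes G :: "nat \<Rightarrow> real^'n" and M :: "nat \<Rightarrow> real^'n^'n"
  assumes "0 < m"
  shows "(\<Sum>j<m. (1 / real m) *\<^sub>R ((mat 1 + s *\<^sub>R M j) *v e)
           + s *\<^sub>R (G (Suc j) - G j - M j *v ((1 / real m) *\<^sub>R e))) = e + s *\<^sub>R (G m - G 0)"
proof -
  have "(\<Sum>j<m. (1 / real m) *\<^sub>R ((mat 1 + s *\<^sub>R M j) *v e) + s *\<^sub>R (G (Suc j) - G j - M j *v ((1 / real m) *\<^sub>R e)))
      = (\<Sum>j<m. (1 / real m) *\<^sub>R e + s *\<^sub>R (G (Suc j) - G j))"
    by (rule sum.cong) (auto simp: matrix_vector_mult_add_rdistrib matrix_vector_mult_scaleR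
        algebra_simps scaleR_matrix_vector_assoc[symmetric])
  also have "(\<Sum>j<m. (1 / real m) *\<^sub>R e) = e"
    by (subst scaleR_sum_left[symmetric]) (use assms in simp)
  then have "(\<Sum>j<m. (1 / real m) *\<^sub>R e + s *\<^sub>R (G (Suc j) - G j)) = e + s *\<^sub>R (G m - G 0)"
    by (simp only: sum.distrib) (simp add: scaleR_sum_right[symmetric] sum_lessThan_telescope[of G])
  finally show ?thesis .
qed

lemma is_norm_linearized_increments_le:
  fixes N :: "real^'n \<Rightarrow> real" and G :: "nat \<Rightarrow> real^'n" and M :: "nat \<Rightarrow> real^'n^'n"
  assumes N: "is_norm N" and B: "\<And>z. N z \<le> B * norm z" "B \<ge> 0" and "0 < m" "0 \<le> s"
    and ind: "\<And>j. j < m \<Longrightarrow> ind_norm N (mat 1 + s *\<^sub>R M j) \<le> c"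
    and lin: "\<And>j. j < m \<Longrightarrow> norm (G (Suc j) - G j - M j *v ((1 / real m) *\<^sub>R e)) \<le> \<eta> / real m"
  shows "N (e + s *\<^sub>R (G m - G 0)) \<le> c * N e + s * B * \<eta>"
proof -
  have piece: "N ((1 / real m) *\<^sub>R ((mat 1 + s *\<^sub>R M j) *v e) + s *\<^sub>R (G (Suc j) - G j - M j *v ((1 / real m) *\<^sub>R e)))
      \<le> (1 / real m) * (c * N e) + s * (B * (\<eta> / real m))" if "j < m" for j
  proof -
    have "N ((mat 1 + s *\<^sub>R M j) *v e) \<le> c * N e"
      using ind_norm_mult_le[OF N] ind[OF that] is_norm_nonneg[OF N] by (meson mult_right_mono order_trans)
    moreover have "N (G (Suc j) - G j - M j *v ((1 / real m) *\<^sub>R e)) \<le> B * (\<eta> / real m)"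
      using B lin[OF that] by (meson mult_left_mono order_trans)
    ultimately show ?thesis
      using is_norm_triangle[OF N] \<open>0 \<le> s\<close>
      by (smt (verit) is_norm_scaleR[OF N] abs_of_nonneg divide_nonneg_nonneg mult_left_mono of_nat_0_le_iff zero_le_one)
  qed
  have "N (e + s *\<^sub>R (G m - G 0))
      \<le> (\<Sum>j<m. N ((1 / real m) *\<^sub>R ((mat 1 + s *\<^sub>R M j) *v e) + s *\<^sub>R (G (Suc j) - G j - M j *v ((1 / real m) *\<^sub>R e))))"
    unfolding sum_linearized_increments[OF \<open>0 < m\<close>, where s=s and M=M and e=e and G=G, symmetric]
    by (rule sublinear_sum_le[OF is_norm_sublinear[OF N]]) simp
  also have "\<dots> \<le> (\<Sum>j<m. (1 / real m) * (c * N e) + s * (B * (\<eta> / real m)))"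
    by (rule sum_mono) (rule piece, simp)
  also have "\<dots> = c * N e + s * B * \<eta>"
    using \<open>0 < m\<close> by (simp add: sum.distrib field_simps)
  finally show ?thesis .
qed

lemma dini_nonpos_diff_of_log_norm_nonpos:
  fixes N :: "real^'n \<Rightarrow> real" and F :: "real^'n \<Rightarrow> real^'n" and A :: "real^'n \<Rightarrow> real^'n^'n"
  assumes N: "is_norm N"
    and der: "\<And>z. (F has_derivative (\<lambda>h. A z *v h)) (at z)"
    and cont: "continuous_on UNIV A"
    and log_norm_A: "\<And>z. log_norm N (A z) \<le> 0"
  shows "dini_nonpos N (x - y) (F x - F y)"
  unfolding dini_nonpos_def
proof (intro allI impI)
  fix \<epsilon> :: real assume "\<epsilon> > 0"
  define e where "e = x - y"
  obtain B where "B \<ge> 0" and B: "\<And>z. N z \<le> B * norm z"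
    using sublinear_bounded_by_norm[OF is_norm_sublinear[OF N]] by blast
  define \<epsilon>1 where "\<epsilon>1 = \<epsilon> / (2 * (B * norm e + 1))"
  define \<epsilon>2 where "\<epsilon>2 = \<epsilon> / (2 * N e + 1)"
  have "B * norm e \<ge> 0" "N e \<ge> 0" using \<open>B \<ge> 0\<close> is_norm_nonneg[OF N] by simp_all
  then have "\<epsilon>1 > 0" "\<epsilon>2 > 0" and \<epsilon>1: "B * (\<epsilon>1 * norm e) \<le> \<epsilon> / 2" and \<epsilon>2: "\<epsilon>2 * N e \<le> \<epsilon> / 2"
    unfolding \<epsilon>1_def \<epsilon>2_def using \<open>\<epsilon> > 0\<close> by (simp_all add: field_simps add_nonneg_pos)
  \<comment> \<open>cut the chord from \<open>y\<close> to \<open>x\<close> into \<open>m\<close> pieces on which \<open>F\<close> is nearly linear\<close>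
  define p where "p j m = y + (real j / real m) *\<^sub>R e" for j m
  obtain m :: nat where "0 < m" and lin:
    "\<And>j. j < m \<Longrightarrow> norm (F (p (Suc j) m) - F (p j m) - A (p j m) *v ((1 / real m) *\<^sub>R e)) \<le> \<epsilon>1 * norm e / real m"
    using linearization_error_on_segment_pieces[OF der cont \<open>\<epsilon>1 > 0\<close>] unfolding p_def by blast
  have "eventually (\<lambda>s. \<forall>j\<in>{..<m}. ind_norm N (mat 1 + s *\<^sub>R A (p j m)) \<le> 1 + s * \<epsilon>2) (at_right 0)"
    using eventually_ind_norm_le[OF N order_le_less_trans[OF log_norm_A \<open>\<epsilon>2 > 0\<close>]]
    by (intro eventually_ball_finite) auto
  then show "eventually (\<lambda>s. N (x - y + s *\<^sub>R (F x - F y)) \<le> N (x - y) + \<epsilon> * s) (at_right 0)"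
    using eventually_at_right_less[of "0::real"]
  proof eventually_elim
    case (elim s)
    have "N (e + s *\<^sub>R (F (p m m) - F (p 0 m))) \<le> (1 + s * \<epsilon>2) * N e + s * B * (\<epsilon>1 * norm e)"
      using elim lin \<open>0 < m\<close>
      by (intro is_norm_linearized_increments_le[OF N B \<open>B \<ge> 0\<close>, where G="\<lambda>j. F (p j m)"
            and M="\<lambda>j. A (p j m)" and \<eta>="\<epsilon>1 * norm e"]) auto
    also have "\<dots> = N e + s * (\<epsilon>2 * N e) + s * (B * (\<epsilon>1 * norm e))" by (simp add: algebra_simps)
    also have "\<dots> \<le> N e + s * (\<epsilon> / 2) + s * (\<epsilon> / 2)"
      using \<epsilon>1 \<epsilon>2 elim by (intro add_mono mult_left_mono) auto
    also have "\<dots> = N e + \<epsilon> * s" by (simp add: algebra_simps)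
    finally show ?case using \<open>0 < m\<close> by (simp add: p_def e_def)
  qed
qed

section \<open>A Henstock comparison principle\<close>

lemma tagged_partial_division_of_subintervals:
  assumes p: "p tagged_partial_division_of S"
    and h: "\<And>x K. (x, K) \<in> p \<Longrightarrow> x \<in> h x K \<and> h x K \<subseteq> K \<and> (\<exists>c d. h x K = cbox c d)"
  shows "(\<lambda>(x, K). (x, h x K)) ` p tagged_partial_division_of S"
  unfolding tagged_partial_division_of_def
proof (intro conjI allI impI)
  show "finite ((\<lambda>(x, K). (x, h x K)) ` p)" using tagged_partial_division_ofD(1)[OF p] by simp
next
  fix x k assume "(x, k) \<in> (\<lambda>(x, K). (x, h x K)) ` p"
  then obtain K where "(x, K) \<in> p" "k = h x K" by auto
  then show "x \<in> k" "k \<subseteq> S" "\<exists>c d. k = cbox c d"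
    using h tagged_partial_division_ofD(3)[OF p] by blast+
next
  fix x1 k1 x2 k2
  assume k: "(x1, k1) \<in> (\<lambda>(x, K). (x, h x K)) ` p \<and> (x2, k2) \<in> (\<lambda>(x, K). (x, h x K)) ` p \<and> (x1, k1) \<noteq> (x2, k2)"
  then obtain K1 K2 where K: "(x1, K1) \<in> p" "(x2, K2) \<in> p" "k1 = h x1 K1" "k2 = h x2 K2" by auto
  with k have "(x1, K1) \<noteq> (x2, K2)" by auto
  then have "interior K1 \<inter> interior K2 = {}" by (rule tagged_partial_division_ofD(5)[OF p K(1,2)])
  moreover have "k1 \<subseteq> K1" "k2 \<subseteq> K2" using h K by blast+
  ultimately show "interior k1 \<inter> interior k2 = {}" using interior_mono by blast
qed

lemma Henstock_lemma_subintervals: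
  fixes f :: "'m::euclidean_space \<Rightarrow> 'n::euclidean_space"
  assumes "f integrable_on cbox a b" "e > 0"
  obtains \<gamma> where "gauge \<gamma>"
    "\<And>p h. p tagged_partial_division_of cbox a b \<Longrightarrow> \<gamma> fine p \<Longrightarrow>
       (\<And>x K. (x, K) \<in> p \<Longrightarrow> x \<in> h x K \<and> h x K \<subseteq> K \<and> (\<exists>c d. h x K = cbox c d)) \<Longrightarrow>
       (\<Sum>(x, K)\<in>p. norm (Henstock_Kurzweil_Integration.content (h x K) *\<^sub>R f x - integral (h x K) f)) < e"
proof -
  obtain \<gamma> where "gauge \<gamma>" and \<gamma>: "\<And>q. q tagged_partial_division_of cbox a b \<Longrightarrow> \<gamma> fine q \<Longrightarrow>
      (\<Sum>(x, K)\<in>q. norm (Henstock_Kurzweil_Integration.content K *\<^sub>R f x - integral K f)) < e"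
    using Henstock_lemma[OF assms] by blast
  have "(\<Sum>(x, K)\<in>p. norm (Henstock_Kurzweil_Integration.content (h x K) *\<^sub>R f x - integral (h x K) f)) < e"
    if p: "p tagged_partial_division_of cbox a b" "\<gamma> fine p"
      and h: "\<And>x K. (x, K) \<in> p \<Longrightarrow> x \<in> h x K \<and> h x K \<subseteq> K \<and> (\<exists>c d. h x K = cbox c d)" for p h
  proof -
    define H where "H = (\<lambda>(x, K). (x, h x K))"
    define G where "G = (\<lambda>(x, K). norm (Henstock_Kurzweil_Integration.content K *\<^sub>R f x - integral K f))"
    have part: "H ` p tagged_partial_division_of cbox a b"
      unfolding H_def by (rule tagged_partial_division_of_subintervals[OF p(1) h])
    have fine: "\<gamma> fine H ` p"
      using p(2) h unfolding fine_def H_def by fastforce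
    have "sum G (H ` p) = sum (G \<circ> H) p"
    proof (rule sum.reindex_nontrivial[OF tagged_partial_division_ofD(1)[OF p(1)]])
      fix u v assume uv: "u \<in> p" "v \<in> p" "u \<noteq> v" "H u = H v"
      obtain x1 K1 x2 K2 where u: "u = (x1, K1)" and v: "v = (x2, K2)" by fastforce
      obtain c d where cd: "h x1 K1 = cbox c d" using h uv(1) u by blast
      \<comment> \<open>two tags collapse only onto a degenerate interval\<close>
      have in_p: "(x1, K1) \<in> p" "(x2, K2) \<in> p" using uv(1,2) u v by auto
      moreover have "(x1, K1) \<noteq> (x2, K2)" using uv(3) u v by auto
      ultimately have disj: "interior K1 \<inter> interior K2 = {}" by (rule tagged_partial_division_ofD(5)[OF p(1)])
      have "(x1, h x1 K1) = (x2, h x2 K2)" using uv(4) unfolding u v H_def by (simp only: prod.case)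
      then have "h x1 K1 = h x2 K2" unfolding prod.inject by (rule conjunct2)
      moreover have "h x1 K1 \<subseteq> K1" "h x2 K2 \<subseteq> K2" using h in_p by blast+
      ultimately have "interior (h x1 K1) \<subseteq> interior K1 \<inter> interior K2"
        by (metis Int_greatest interior_mono)
      then have "interior (h x1 K1) = {}" using disj by blast
      then have "Henstock_Kurzweil_Integration.content (cbox c d) = 0"
        unfolding cd by (simp add: content_eq_0_interior)
      then show "G (H u) = 0" unfolding G_def H_def u using cd by simp
    qed
    also have "\<dots> = (\<Sum>(x, K)\<in>p. norm (Henstock_Kurzweil_Integration.content (h x K) *\<^sub>R f x - integral (h x K) f))"
      by (rule sum.cong) (auto simp: G_def H_def)
    finally show ?thesis using \<gamma>[OF part fine] unfolding G_def by simp
  qed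
  with \<open>gauge \<gamma>\<close> show ?thesis using that by blast
qed

lemma tagged_division_of_real_elem:
  fixes a b :: real
  assumes "p tagged_division_of {a..b}" "(r, K) \<in> p"
  obtains u v where "K = {u..v}" "u \<le> r" "r \<le> v" "a \<le> u" "v \<le> b"
proof -
  obtain u v where K: "K = cbox u v" using tagged_division_ofD(4)[OF assms] by blast
  have "r \<in> K" "K \<subseteq> {a..b}" using tagged_division_ofD(2,3)[OF assms] by auto
  with K show ?thesis by (intro that[of u v]) auto
qed

lemma Henstock_lemma_half_intervals:
  fixes g :: "real \<Rightarrow> 'a::euclidean_space"
  assumes "g integrable_on {a..b}" "\<epsilon> > 0"
  obtains \<gamma> where "gauge \<gamma>"
    "\<And>p. p tagged_division_of {a..b} \<Longrightarrow> \<gamma> fine p \<Longrightarrow>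
       (\<Sum>(r, K)\<in>p. norm (integral {r..Sup K} g - (Sup K - r) *\<^sub>R g r)
          + norm (integral {Inf K..r} g - (r - Inf K) *\<^sub>R g r)) < \<epsilon>"
proof -
  have "g integrable_on cbox a b" "\<epsilon> / 2 > 0" using assms by simp_all
  then obtain \<gamma> where "gauge \<gamma>" and \<gamma>: "\<And>p h. p tagged_partial_division_of cbox a b \<Longrightarrow> \<gamma> fine p \<Longrightarrow>
       (\<And>x K. (x, K) \<in> p \<Longrightarrow> x \<in> h x K \<and> h x K \<subseteq> K \<and> (\<exists>c d. h x K = cbox c d)) \<Longrightarrow>
       (\<Sum>(x, K)\<in>p. norm (Henstock_Kurzweil_Integration.content (h x K) *\<^sub>R g x - integral (h x K) g)) < \<epsilon> / 2"
    by (rule Henstock_lemma_subintervals) blast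
  have "(\<Sum>(r, K)\<in>p. norm (integral {r..Sup K} g - (Sup K - r) *\<^sub>R g r)
          + norm (integral {Inf K..r} g - (r - Inf K) *\<^sub>R g r)) < \<epsilon>"
    if p: "p tagged_division_of {a..b}" "\<gamma> fine p" for p
  proof -
    have pd: "p tagged_partial_division_of cbox a b" using p(1) tagged_division_of_def by auto
    have halves: "(x, K) \<in> p \<Longrightarrow> x \<in> {x..Sup K} \<and> {x..Sup K} \<subseteq> K \<and> (\<exists>c d. {x..Sup K} = cbox c d)"
      "(x, K) \<in> p \<Longrightarrow> x \<in> {Inf K..x} \<and> {Inf K..x} \<subseteq> K \<and> (\<exists>c d. {Inf K..x} = cbox c d)" for x K
      by (auto elim!: tagged_division_of_real_elem[OF p(1)])
    have "norm (integral {r..Sup K} g - (Sup K - r) *\<^sub>R g r) + norm (integral {Inf K..r} g - (r - Inf K) *\<^sub>R g r)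
        = norm (Henstock_Kurzweil_Integration.content {r..Sup K} *\<^sub>R g r - integral {r..Sup K} g)
          + norm (Henstock_Kurzweil_Integration.content {Inf K..r} *\<^sub>R g r - integral {Inf K..r} g)"
      if "(r, K) \<in> p" for r K
      using that by (auto simp: norm_minus_commute elim!: tagged_division_of_real_elem[OF p(1)])
    then have "(\<Sum>(r, K)\<in>p. norm (integral {r..Sup K} g - (Sup K - r) *\<^sub>R g r)
          + norm (integral {Inf K..r} g - (r - Inf K) *\<^sub>R g r))
        = (\<Sum>(r, K)\<in>p. norm (Henstock_Kurzweil_Integration.content {r..Sup K} *\<^sub>R g r - integral {r..Sup K} g))
          + (\<Sum>(r, K)\<in>p. norm (Henstock_Kurzweil_Integration.content {Inf K..r} *\<^sub>R g r - integral {Inf K..r} g))"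
      by (simp add: split_def sum.distrib[symmetric] cong: sum.cong)
    also have "\<dots> < \<epsilon> / 2 + \<epsilon> / 2"
      by (intro add_strict_mono \<gamma>[OF pd p(2)] halves)
    finally show ?thesis by simp
  qed
  with \<open>gauge \<gamma>\<close> that show ?thesis by blast
qed

lemma gauge_of_local_increment_bounds:
  fixes g :: "real \<Rightarrow> 'a::real_normed_vector" and F :: "real \<Rightarrow> real"
  assumes local: "\<And>r. r \<in> {a..b} \<Longrightarrow> \<exists>\<delta>>0. \<forall>u v. a \<le> u \<longrightarrow> u \<le> r \<longrightarrow> r \<le> v \<longrightarrow> v \<le> b \<longrightarrow> v - u < \<delta> \<longrightarrow>
      F v - F r \<le> (v - r) * C + B * norm (integral {r..v} g - (v - r) *\<^sub>R g r) \<and>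
      F r - F u \<le> (r - u) * C + B * norm (integral {u..r} g - (r - u) *\<^sub>R g r)"
  obtains \<gamma> where "gauge \<gamma>"
    "\<And>p r K. p tagged_division_of {a..b} \<Longrightarrow> \<gamma> fine p \<Longrightarrow> (r, K) \<in> p \<Longrightarrow>
      F (Sup K) - F (Inf K) \<le> (Sup K - Inf K) * C + B * (norm (integral {r..Sup K} g - (Sup K - r) *\<^sub>R g r)
        + norm (integral {Inf K..r} g - (r - Inf K) *\<^sub>R g r))"
proof -
  from bchoice[OF ballI[OF local]] obtain \<delta> where \<delta>: "\<forall>r\<in>{a..b}. \<delta> r > 0 \<and>
      (\<forall>u v. a \<le> u \<longrightarrow> u \<le> r \<longrightarrow> r \<le> v \<longrightarrow> v \<le> b \<longrightarrow> v - u < \<delta> r \<longrightarrow>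
        F v - F r \<le> (v - r) * C + B * norm (integral {r..v} g - (v - r) *\<^sub>R g r) \<and>
        F r - F u \<le> (r - u) * C + B * norm (integral {u..r} g - (r - u) *\<^sub>R g r))" ..
  define \<gamma> where "\<gamma> r = ball r (if r \<in> {a..b} then \<delta> r / 2 else 1)" for r
  have "gauge \<gamma>" unfolding \<gamma>_def using \<delta> by (intro gauge_ball_dependent) auto
  moreover have "F (Sup K) - F (Inf K) \<le> (Sup K - Inf K) * C + B * (norm (integral {r..Sup K} g - (Sup K - r) *\<^sub>R g r)
        + norm (integral {Inf K..r} g - (r - Inf K) *\<^sub>R g r))"
    if p: "p tagged_division_of {a..b}" "\<gamma> fine p" and rK: "(r, K) \<in> p" for p r K
  proof -
    obtain u v where K: "K = {u..v}" "u \<le> r" "r \<le> v" "a \<le> u" "v \<le> b"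
      using tagged_division_of_real_elem[OF p(1) rK] by blast
    have r: "r \<in> {a..b}" using K by auto
    have "K \<subseteq> ball r (\<delta> r / 2)" using p(2) rK r unfolding fine_def \<gamma>_def by fastforce
    moreover have "u \<in> K" "v \<in> K" using K by auto
    ultimately have "\<bar>r - u\<bar> * 2 < \<delta> r" "\<bar>r - v\<bar> * 2 < \<delta> r" by (auto simp: dist_real_def subset_iff)
    then have "v - u < \<delta> r" using K(2,3) by (simp add: abs_if split: if_splits)
    then have "F v - F r \<le> (v - r) * C + B * norm (integral {r..v} g - (v - r) *\<^sub>R g r) \<and>
        F r - F u \<le> (r - u) * C + B * norm (integral {u..r} g - (r - u) *\<^sub>R g r)"
      using \<delta> r K by blast
    moreover have "Sup K = v" "Inf K = u" using K by auto
    ultimately show ?thesis by (simp add: algebra_simps)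
  qed
  ultimately show ?thesis using that by blast
qed

lemma increment_le_Henstock:
  fixes g :: "real \<Rightarrow> 'a::euclidean_space" and F :: "real \<Rightarrow> real"
  assumes "a \<le> b" and g: "g integrable_on {a..b}" and "B \<ge> 0"
    and local: "\<And>r. r \<in> {a..b} \<Longrightarrow> \<exists>\<delta>>0. \<forall>u v. a \<le> u \<longrightarrow> u \<le> r \<longrightarrow> r \<le> v \<longrightarrow> v \<le> b \<longrightarrow> v - u < \<delta> \<longrightarrow>
      F v - F r \<le> (v - r) * C + B * norm (integral {r..v} g - (v - r) *\<^sub>R g r) \<and>
      F r - F u \<le> (r - u) * C + B * norm (integral {u..r} g - (r - u) *\<^sub>R g r)"
  shows "F b - F a \<le> (b - a) * C"
proof (rule field_le_epsilon)
  fix \<epsilon> :: real assume "\<epsilon> > 0"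
  define E where "E = (\<lambda>(r, K). norm (integral {r..Sup K} g - (Sup K - r) *\<^sub>R g r)
    + norm (integral {Inf K..r} g - (r - Inf K) *\<^sub>R g r))"
  have "\<epsilon> / (B + 1) > 0" using \<open>\<epsilon> > 0\<close> \<open>B \<ge> 0\<close> by simp
  then obtain \<gamma>1 where "gauge \<gamma>1"
    and Henstock: "\<And>p. p tagged_division_of {a..b} \<Longrightarrow> \<gamma>1 fine p \<Longrightarrow> (\<Sum>rK\<in>p. E rK) < \<epsilon> / (B + 1)"
    unfolding E_def by (rule Henstock_lemma_half_intervals[OF g]) blast
  obtain \<gamma>2 where "gauge \<gamma>2" and piece: "\<And>p r K. p tagged_division_of {a..b} \<Longrightarrow> \<gamma>2 fine p \<Longrightarrow> (r, K) \<in> p \<Longrightarrow>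
      F (Sup K) - F (Inf K) \<le> (Sup K - Inf K) * C + B * E (r, K)"
    unfolding E_def prod.case by (rule gauge_of_local_increment_bounds[OF local]) auto
  obtain p where p: "p tagged_division_of {a..b}" "(\<lambda>r. \<gamma>1 r \<inter> \<gamma>2 r) fine p"
    using fine_division_exists_real[OF gauge_Int[OF \<open>gauge \<gamma>1\<close> \<open>gauge \<gamma>2\<close>]] by metis
  then have "\<gamma>1 fine p" "\<gamma>2 fine p" by (auto simp: fine_Int)
  have "F b - F a = (\<Sum>(r, K)\<in>p. F (Sup K) - F (Inf K))"
    using additive_tagged_division_1[OF \<open>a \<le> b\<close> p(1), of F] by simp
  also have "\<dots> \<le> (\<Sum>(r, K)\<in>p. (Sup K - Inf K) * C + B * E (r, K))"
    using piece[OF p(1) \<open>\<gamma>2 fine p\<close>] by (intro sum_mono) auto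
  also have "\<dots> = (\<Sum>(r, K)\<in>p. Sup K - Inf K) * C + B * (\<Sum>rK\<in>p. E rK)"
    by (simp add: split_def sum.distrib sum_distrib_left[symmetric] sum_distrib_right)
  also have "(\<Sum>(r, K)\<in>p. Sup K - Inf K) = b - a"
    using additive_tagged_division_1[OF \<open>a \<le> b\<close> p(1), of "\<lambda>x. x"] by simp
  also have "B * (\<Sum>rK\<in>p. E rK) \<le> B * (\<epsilon> / (B + 1))"
    using Henstock[OF p(1) \<open>\<gamma>1 fine p\<close>] \<open>B \<ge> 0\<close> by (intro mult_left_mono) auto
  also have "\<dots> \<le> \<epsilon>" using \<open>\<epsilon> > 0\<close> \<open>B \<ge> 0\<close> by (simp add: field_simps)
  finally show "F b - F a \<le> (b - a) * C + \<epsilon>" by simp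
qed

section \<open>Growth bounds along Caratheodory solutions\<close>

lemma has_integral_increment:
  fixes g :: "real \<Rightarrow> 'a::banach"
  assumes y: "\<And>t. t \<in> {a..b} \<Longrightarrow> (g has_integral (y t - y a)) {a..t}"
    and "a \<le> s" "s \<le> t" "t \<le> b"
  shows "(g has_integral (y t - y s)) {s..t}"
proof -
  have at: "(g has_integral (y t - y a)) {a..t}" and as: "(g has_integral (y s - y a)) {a..s}"
    using y assms(2-4) by auto
  have "g integrable_on {s..t}"
    using integrable_subinterval_real[OF has_integral_integrable[OF at]] \<open>a \<le> s\<close> by simp
  moreover have "integral {a..s} g + integral {s..t} g = integral {a..t} g"
    using assms(2,3) has_integral_integrable[OF at] by (rule Henstock_Kurzweil_Integration.integral_combine)
  then have "integral {s..t} g = y t - y s"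
    unfolding integral_unique[OF at] integral_unique[OF as] by (simp add: algebra_simps)
  ultimately show ?thesis by (metis has_integral_integral)
qed

lemma dini_nonpos_local_increment_bounds:
  assumes P: "sublinear P" and B: "\<And>z. P z \<le> B * norm z"
    and d: "dini_nonpos P x d" and K: "P (w - d) \<le> K" and "\<epsilon> > 0"
  obtains \<delta> where "\<delta> > 0"
    "\<And>h E. 0 \<le> h \<Longrightarrow> h < \<delta> \<Longrightarrow> P (x + h *\<^sub>R w + E) \<le> P x + h * (K + \<epsilon>) + B * norm E"
    "\<And>h E. 0 \<le> h \<Longrightarrow> P x \<le> P (x - h *\<^sub>R w - E) + h * (K + \<epsilon>) + B * norm E"
proof -
  obtain \<delta> where "\<delta> > 0" and \<delta>: "\<And>s. 0 < s \<Longrightarrow> s < \<delta> \<Longrightarrow> P (x + s *\<^sub>R d) \<le> P x + \<epsilon> * s"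
    using d \<open>\<epsilon> > 0\<close> unfolding dini_nonpos_def eventually_at_right_field by blast
  have "P (x + h *\<^sub>R w + E) \<le> P x + h * (K + \<epsilon>) + B * norm E" if "0 \<le> h" "h < \<delta>" for h E
  proof -
    have "P (x + h *\<^sub>R w + E) \<le> P (x + h *\<^sub>R d) + h * K + B * norm E"
      using sublinear_perturb_le[OF P B K \<open>0 \<le> h\<close>, of "x + h *\<^sub>R d" E] by (simp add: algebra_simps)
    also have "P (x + h *\<^sub>R d) \<le> P x + \<epsilon> * h"
      using \<delta>[of h] that by (cases "h = 0") auto
    finally show ?thesis by (simp add: algebra_simps)
  qed
  moreover have "P x \<le> P (x - h *\<^sub>R w - E) + h * (K + \<epsilon>) + B * norm E" if "0 \<le> h" for h E
  proof -
    have "P x \<le> P (x - h *\<^sub>R d)" by (rule dini_nonpos_backward[OF P d that])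
    also have "\<dots> \<le> P (x - h *\<^sub>R w - E) + h * K + B * norm E"
      using sublinear_perturb_le[OF P B K that, of "x - h *\<^sub>R w - E" E] by (simp add: algebra_simps)
    also have "\<dots> \<le> P (x - h *\<^sub>R w - E) + h * (K + \<epsilon>) + B * norm E"
      using that \<open>\<epsilon> > 0\<close> by (simp add: algebra_simps)
    finally show ?thesis .
  qed
  ultimately show ?thesis using that \<open>\<delta> > 0\<close> by blast
qed

lemma sublinear_growth_bound:
  fixes P :: "'a::euclidean_space \<Rightarrow> real"
  assumes P: "sublinear P" and "a \<le> b"
    and y: "\<And>s t. a \<le> s \<Longrightarrow> s \<le> t \<Longrightarrow> t \<le> b \<Longrightarrow> (g has_integral (y t - y s)) {s..t}"
    and dini: "\<And>r. r \<in> {a..b} \<Longrightarrow> dini_nonpos P (y r) (d r)"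
    and K: "\<And>r. r \<in> {a..b} \<Longrightarrow> P (g r - d r) \<le> K"
  shows "P (y b) \<le> P (y a) + (b - a) * K"
proof (rule field_le_epsilon)
  fix \<epsilon> :: real assume "\<epsilon> > 0"
  obtain B where "B \<ge> 0" and B: "\<And>z. P z \<le> B * norm z" using sublinear_bounded_by_norm[OF P] by blast
  define \<epsilon>' where "\<epsilon>' = \<epsilon> / (b - a + 1)"
  have "\<epsilon>' > 0" and \<epsilon>': "(b - a) * \<epsilon>' \<le> \<epsilon>"
    unfolding \<epsilon>'_def using \<open>\<epsilon> > 0\<close> \<open>a \<le> b\<close> by (simp_all add: field_simps)
  have "P (y b) - P (y a) \<le> (b - a) * (K + \<epsilon>')"
  proof (rule increment_le_Henstock[OF \<open>a \<le> b\<close> _ \<open>B \<ge> 0\<close>])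
    show "g integrable_on {a..b}" using y[of a b] \<open>a \<le> b\<close> by blast
  next
    fix r assume r: "r \<in> {a..b}"
    obtain \<delta> where "\<delta> > 0"
      and fwd: "\<And>h E. 0 \<le> h \<Longrightarrow> h < \<delta> \<Longrightarrow> P (y r + h *\<^sub>R g r + E) \<le> P (y r) + h * (K + \<epsilon>') + B * norm E"
      and bwd: "\<And>h E. 0 \<le> h \<Longrightarrow> P (y r) \<le> P (y r - h *\<^sub>R g r - E) + h * (K + \<epsilon>') + B * norm E"
      by (rule dini_nonpos_local_increment_bounds[OF P B dini[OF r] K[OF r] \<open>\<epsilon>' > 0\<close>]) blast
    show "\<exists>\<delta>>0. \<forall>u v. a \<le> u \<longrightarrow> u \<le> r \<longrightarrow> r \<le> v \<longrightarrow> v \<le> b \<longrightarrow> v - u < \<delta> \<longrightarrow>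
        P (y v) - P (y r) \<le> (v - r) * (K + \<epsilon>') + B * norm (integral {r..v} g - (v - r) *\<^sub>R g r) \<and>
        P (y r) - P (y u) \<le> (r - u) * (K + \<epsilon>') + B * norm (integral {u..r} g - (r - u) *\<^sub>R g r)"
    proof (intro exI[of _ \<delta>] conjI allI impI \<open>\<delta> > 0\<close>)
      fix u v assume uv: "a \<le> u" "u \<le> r" "r \<le> v" "v \<le> b" "v - u < \<delta>"
      define E1 where "E1 = integral {r..v} g - (v - r) *\<^sub>R g r"
      define E2 where "E2 = integral {u..r} g - (r - u) *\<^sub>R g r"
      have "integral {r..v} g = y v - y r" "integral {u..r} g = y r - y u"
        using y uv by (auto intro: integral_unique)
      then have yv: "y v = y r + (v - r) *\<^sub>R g r + E1" and yu: "y u = y r - (r - u) *\<^sub>R g r - E2"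
        unfolding E1_def E2_def by (simp_all add: algebra_simps)
      have "P (y v) \<le> P (y r) + (v - r) * (K + \<epsilon>') + B * norm E1"
        unfolding yv using uv by (intro fwd) auto
      moreover have "P (y r) \<le> P (y u) + (r - u) * (K + \<epsilon>') + B * norm E2"
        unfolding yu using uv by (intro bwd) auto
      ultimately show "P (y v) - P (y r) \<le> (v - r) * (K + \<epsilon>') + B * norm (integral {r..v} g - (v - r) *\<^sub>R g r)"
        "P (y r) - P (y u) \<le> (r - u) * (K + \<epsilon>') + B * norm (integral {u..r} g - (r - u) *\<^sub>R g r)"
        unfolding E1_def E2_def by simp_all
    qed
  qed
  moreover have "(b - a) * (K + \<epsilon>') = (b - a) * K + (b - a) * \<epsilon>'" by (simp add: algebra_simps)
  ultimately show "P (y b) \<le> P (y a) + (b - a) * K + \<epsilon>" using \<epsilon>' by linarith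
qed

lemma continuous_on_section:
  assumes "continuous_on (S \<times> X \<times> W) (\<lambda>(t, x, w). g t x w)" "t \<in> S" "w \<in> W"
  shows "continuous_on X (\<lambda>x. g t x w)"
proof -
  have "continuous_on X ((\<lambda>(t, x, w). g t x w) \<circ> (\<lambda>x. (t, x, w)))"
    using assms by (intro continuous_on_compose continuous_on_subset[OF assms(1)]) (auto intro!: continuous_intros)
  then show ?thesis by (simp add: o_def)
qed

lemma state_deviation_bound:
  fixes N :: "real^'n \<Rightarrow> real" and F G :: "real \<Rightarrow> real^'n \<Rightarrow> real^'n"
    and A :: "real \<Rightarrow> real^'n \<Rightarrow> real^'n^'n"
  assumes N: "is_norm N"
    and der: "\<And>t z. t \<in> {0..T} \<Longrightarrow> (F t has_derivative (\<lambda>h. A t z *v h)) (at z)"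
    and cont: "\<And>t. t \<in> {0..T} \<Longrightarrow> continuous_on UNIV (A t)"
    and log_norm_A: "\<And>t z. t \<in> {0..T} \<Longrightarrow> log_norm N (A t z) \<le> 0"
    and K: "\<And>t z. t \<in> {0..T} \<Longrightarrow> N (F t z - G t z) \<le> K"
    and x: "carath_sol T F x" and xbar: "carath_sol T G xbar" and t: "t \<in> {0..T}"
  shows "N (x t - xbar t) \<le> N (x 0 - xbar 0) + t * K"
proof -
  have "N (x t - xbar t) \<le> N (x 0 - xbar 0) + (t - 0) * K"
  proof (rule sublinear_growth_bound[OF is_norm_sublinear[OF N], where y="\<lambda>s. x s - xbar s"
        and g="\<lambda>r. F r (x r) - G r (xbar r)" and d="\<lambda>r. F r (x r) - F r (xbar r)"])
    fix s t' assume st: "0 \<le> s" "s \<le> t'" "t' \<le> t"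
    have "((\<lambda>r. F r (x r)) has_integral (x t' - x s)) {s..t'}"
      "((\<lambda>r. G r (xbar r)) has_integral (xbar t' - xbar s)) {s..t'}"
      using x xbar st t unfolding carath_sol_def
      by (auto intro: has_integral_increment[where a=0 and b=T])
    then have "((\<lambda>r. F r (x r) - G r (xbar r)) has_integral ((x t' - x s) - (xbar t' - xbar s))) {s..t'}"
      by (rule has_integral_diff)
    then show "((\<lambda>r. F r (x r) - G r (xbar r)) has_integral (x t' - xbar t' - (x s - xbar s))) {s..t'}"
      by (simp add: algebra_simps)
  next
    fix r assume "r \<in> {0..t}"
    then have r: "r \<in> {0..T}" using t by auto
    show "dini_nonpos N (x r - xbar r) (F r (x r) - F r (xbar r))"
      by (rule dini_nonpos_diff_of_log_norm_nonpos[OF N der[OF r] cont[OF r] log_norm_A[OF r]])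
    show "N (F r (x r) - G r (xbar r) - (F r (x r) - F r (xbar r))) \<le> K"
      using K[OF r, of "xbar r"] by simp
  qed (use t in auto)
  then show ?thesis by simp
qed

lemma adjoint_growth_bound:
  fixes N :: "real^'n \<Rightarrow> real" and A :: "real \<Rightarrow> real^'n^'n" and v lam :: "real \<Rightarrow> real^'n"
  assumes N: "is_norm N"
    and log_norm_A: "\<And>t. t \<in> {0..T} \<Longrightarrow> log_norm N (A t) \<le> 0"
    and K: "\<And>t. t \<in> {0..T} \<Longrightarrow> dual_norm N (v t) \<le> K"
    and lam: "carath_sol T (\<lambda>t l. - (transpose (A t) *v l) - v t) lam" and t: "t \<in> {0..T}"
  shows "dual_norm N (lam t) \<le> dual_norm N (lam T) + (T - t) * K"
proof -
  \<comment> \<open>reversing time turns the adjoint equation into a forward one in the direction \<open>A\<^sup>T \<lambda>\<close>\<close>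
  have "dual_norm N (lam (- (- t))) \<le> dual_norm N (lam (- (- T))) + (- t - - T) * K"
  proof (rule sublinear_growth_bound[OF sublinear_dual_norm[OF N], where y="\<lambda>s. lam (- s)"
        and g="\<lambda>r. transpose (A (- r)) *v lam (- r) + v (- r)" and d="\<lambda>r. transpose (A (- r)) *v lam (- r)"])
    fix s t' assume st: "- T \<le> s" "s \<le> t'" "t' \<le> - t"
    have "((\<lambda>r. - (transpose (A r) *v lam r) - v r) has_integral (lam (- s) - lam (- t'))) {- t'..- s}"
      using lam st t unfolding carath_sol_def
      by (auto intro: has_integral_increment[where a=0 and b=T])
    then have "((\<lambda>r. - (transpose (A (- r)) *v lam (- r)) - v (- r)) has_integral (lam (- s) - lam (- t'))) {s..t'}"
      using has_integral_reflect_real[where f="\<lambda>r. - (transpose (A r) *v lam r) - v r" and a="- t'" and b="- s"]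
      by simp
    from has_integral_neg[OF this]
    show "((\<lambda>r. transpose (A (- r)) *v lam (- r) + v (- r)) has_integral (lam (- t') - lam (- s))) {s..t'}"
      by (simp add: add.commute)
  next
    fix r assume "r \<in> {- T..- t}"
    then have r: "- r \<in> {0..T}" using t by auto
    show "dini_nonpos (dual_norm N) (lam (- r)) (transpose (A (- r)) *v lam (- r))"
      by (rule dini_nonpos_dual_norm_transpose[OF N log_norm_A[OF r]])
    show "dual_norm N (transpose (A (- r)) *v lam (- r) + v (- r) - transpose (A (- r)) *v lam (- r)) \<le> K"
      using K[OF r] by simp
  qed (use t in auto)
  then show ?thesis by simp
qed
theorem lemma3:
  fixes T c L :: real
    and U :: "(real^'k) set"
    and V :: "(real^'n) set"
    and f :: "real \<Rightarrow> real^'n \<Rightarrow> real^'k \<Rightarrow> real^'n"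
    and Dx :: "real \<Rightarrow> real^'n \<Rightarrow> real^'k \<Rightarrow> real^'n^'n"
    and x0 :: "real^'n"
    and N :: "real^'n \<Rightarrow> real"
    and NU :: "real^'k \<Rightarrow> real"
    and X0 L0 :: "(real^'n) set"
  assumes T_pos: "T > 0"
    and U0: "0 \<in> U"
    and f_cont: "continuous_on ({0..T} \<times> UNIV \<times> U) (\<lambda>(t, x, u). f t x u)"
    and Dx_deriv: "\<And>t x u. t \<in> {0..T} \<Longrightarrow> u \<in> U \<Longrightarrow>
        ((\<lambda>y. f t y u) has_derivative (\<lambda>h. Dx t x u *v h)) (at x)"
    and Dx_cont: "continuous_on ({0..T} \<times> UNIV \<times> U) (\<lambda>(t, x, u). Dx t x u)"
    and Du_ex: "\<exists>Du :: real \<Rightarrow> real^'n \<Rightarrow> real^'k \<Rightarrow> real^'k^'n.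
        (\<forall>t\<in>{0..T}. \<forall>x. \<forall>u\<in>U.
           ((\<lambda>w. f t x w) has_derivative (\<lambda>h. Du t x u *v h)) (at u within U))
        \<and> continuous_on ({0..T} \<times> UNIV \<times> U) (\<lambda>(t, x, u). Du t x u)"
    and N_norm: "is_norm N"
    and NU_norm: "is_norm NU"
    and A1_c: "c > 0"
    and A1_osl: "\<And>t x u. t \<in> {0..T} \<Longrightarrow> u \<in> U \<Longrightarrow> log_norm N (Dx t x u) \<le> - c"
    and A1_nom: "\<exists>xbar. carath_sol T (\<lambda>t x. f t x 0) xbar \<and> xbar 0 = x0
                   \<and> bounded_wrt N (xbar ` {0..T})"
    and A2: "\<And>t x u1 u2. t \<in> {0..T} \<Longrightarrow> u1 \<in> U \<Longrightarrow> u2 \<in> U \<Longrightarrow>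
        N (f t x u1 - f t x u2) \<le> L * NU (u1 - u2)"
    and U_bdd: "bounded_wrt NU U"
    and V_bdd: "bounded_wrt (dual_norm N) V"
    and X0_bdd: "bounded_wrt N X0"
    and L0_bdd: "bounded_wrt (dual_norm N) L0"
  shows "\<exists>X \<Lambda>. bounded_wrt N X \<and> bounded_wrt (dual_norm N) \<Lambda> \<and>
     (\<forall>u v x lam.
        u measurable_on {0..T} \<and> (\<forall>t\<in>{0..T}. u t \<in> U) \<and>
        v measurable_on {0..T} \<and> (\<forall>t\<in>{0..T}. v t \<in> V) \<and>
        carath_sol T (\<lambda>t y. f t y (u t)) x \<and>
        carath_sol T (\<lambda>t l. - (transpose (Dx t (x t) (u t)) *v l) - v t) lam \<and>
        x 0 \<in> X0 \<and> lam T \<in> L0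
        \<longrightarrow> (\<forall>t\<in>{0..T}. x t \<in> X \<and> lam t \<in> \<Lambda>))"
proof -
  obtain xbar where xbar: "carath_sol T (\<lambda>t x. f t x 0) xbar" "xbar 0 = x0"
    and "bounded_wrt N (xbar ` {0..T})" using A1_nom by blast
  then obtain Bb where Bb: "\<And>t. t \<in> {0..T} \<Longrightarrow> N (xbar t) \<le> Bb" unfolding bounded_wrt_def by blast
  obtain BU BV B0 BL where BU: "\<And>z. z \<in> U \<Longrightarrow> NU z \<le> BU" and BV: "\<And>z. z \<in> V \<Longrightarrow> dual_norm N z \<le> BV"
    and B0: "\<And>z. z \<in> X0 \<Longrightarrow> N z \<le> B0" and BL: "\<And>z. z \<in> L0 \<Longrightarrow> dual_norm N z \<le> BL"
    using U_bdd V_bdd X0_bdd L0_bdd unfolding bounded_wrt_def by metis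
  define K where "K = \<bar>L\<bar> * \<bar>BU\<bar>"
  have input_effect: "N (f t z u - f t z 0) \<le> K" if "t \<in> {0..T}" "u \<in> U" for t z u
    using A2[OF that U0] BU[OF that(2)] is_norm_nonneg[OF NU_norm, of u] unfolding K_def
    by (smt (verit) abs_ge_self abs_mult abs_of_nonneg mult_left_mono mult_right_mono diff_zero)
  have log_norm_Dx: "log_norm N (Dx t z u) \<le> 0" if "t \<in> {0..T}" "u \<in> U" for t z u
    using A1_osl[OF that] A1_c by (meson neg_le_0_iff_le less_imp_le order_trans)
  have x_bound: "N (x t) \<le> B0 + N x0 + T * K + Bb"
    if "carath_sol T (\<lambda>t y. f t y (u t)) x" "\<forall>t\<in>{0..T}. u t \<in> U" "x 0 \<in> X0" "t \<in> {0..T}" for u x t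
  proof -
    have "N (x t - xbar t) \<le> N (x 0 - xbar 0) + t * K"
      using that xbar(1) by (intro state_deviation_bound[OF N_norm Dx_deriv continuous_on_section[OF Dx_cont]
          log_norm_Dx _ _ _ \<open>t \<in> {0..T}\<close>]) (auto intro: input_effect)
    moreover have "N (x 0 - xbar 0) \<le> N (x 0) + N x0" "N (x t) \<le> N (x t - xbar t) + N (xbar t)"
      using is_norm_triangle[OF N_norm, of "x 0" "- x0"] is_norm_minus[OF N_norm, of x0] xbar(2)
        is_norm_triangle[OF N_norm, of "x t - xbar t" "xbar t"] by simp_all
    moreover have "t * K \<le> T * K" using that(4) by (intro mult_right_mono) (auto simp: K_def)
    ultimately show ?thesis using B0[OF that(3)] Bb[OF that(4)] by simp
  qed
  have lam_bound: "dual_norm N (lam t) \<le> BL + T * \<bar>BV\<bar>"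
    if "carath_sol T (\<lambda>t l. - (transpose (Dx t (x t) (u t)) *v l) - v t) lam"
      "\<forall>t\<in>{0..T}. u t \<in> U" "\<forall>t\<in>{0..T}. v t \<in> V" "lam T \<in> L0" "t \<in> {0..T}" for u v x lam t
  proof -
    have "dual_norm N (lam t) \<le> dual_norm N (lam T) + (T - t) * \<bar>BV\<bar>"
      using that by (intro adjoint_growth_bound[OF N_norm log_norm_Dx _ _ \<open>t \<in> {0..T}\<close>])
        (auto intro: order_trans[OF BV abs_ge_self])
    moreover have "(T - t) * \<bar>BV\<bar> \<le> T * \<bar>BV\<bar>" using that(5) by (intro mult_right_mono) auto
    ultimately show ?thesis using BL[OF that(4)] by simp
  qed
  show ?thesis
    by (intro exI[of _ "{z. N z \<le> B0 + N x0 + T * K + Bb}"] exI[of _ "{z. dual_norm N z \<le> BL + T * \<bar>BV\<bar>}"])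
      (auto simp: bounded_wrt_def intro: x_bound lam_bound)
qed

end
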